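(* Let $\mathbf p$ be a Nash-routing of a sum-bucket game and $\mathbf p^*$ an optimal routing. Then for every edge $e$ and every player $i\in\Pi_e(\mathbf p)$, $|f(e,i)|\ge1$.
   Context: A routing game $(\mathbf N,G,\mathcal P)$: players $\{1,\dots,N\}$ ($N\ge1$), a finite graph $G$, and for each player $i$ a nonempty finite set $\mathcal P_i$ of paths (each with at least one edge) from $u_i$ to $v_i$; $\mathcal P=\bigcup_i\mathcal P_i$, $L=\max_{p\in\mathcal P}|p|$. A routing is $\mathbf p=[p_1,\dots,p_N]$, $p_i\in\mathcal P_i$. Sum-bucket game: for $k=0,\dots,\lceil\lg L\rceil$ bucket $B_k$ = paths in $\mathcal P$ with length in $[2^k,2^{k+1})$, $B(q)$ = bucket index of $q$; normalized length $\overline D_q=2^{B(q)+1}-1$; $\overline C_{e,q}(\mathbf p)$ = number of players $j$ with $e\in p_j$ and $B(p_j)=B(q)$; $\overline C_q(\mathbf p)=\max_{e\in q}\overline C_{e,q}(\mathbf p)$; $\overline C_i=\overline C_{p_i}$, $\overline D_i=\overline D_{p_i}$; player cost $pc_i=\overline C_i+\overline D_i$; $\overline C(\mathbf p)=\max_i\overline C_i$, $\overline D(\mathbf p)=\max_i\overline D_i$; social cost $SC=\overline C+\overline D$. A Nash-routing: no player can strictly lower its cost by unilaterally changing its path within $\mathcal P_i$. An optimal routing $\mathbf p^*=[p_1^*,\dots,p_N^*]$ minimizes $SC$; $\overline D^*=\overline D(\mathbf p^* )$. $\Pi_e(\mathbf p)$ = set of players $i$ with $e\in p_i$. For $i\in\Pi_e(\mathbf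 p)$: $f(e,i)=\{e'\in p_i^*:\ \overline C_{e',p_i^*}(\mathbf p)\ge\overline C_{e,p_i}(\mathbf p)-\overline D^*\}$. *)

theory Defs
  imports Main
begin

(* Graph: finite vertex set V, finite edge set E; each edge e has endpoints ep e
   (undirected, multi-edges allowed). A path is a list of edges with distinct
   vertices along it. Players are 1..N. *)

definition is_path :: "'v set \<Rightarrow> 'e set \<Rightarrow> ('e \<Rightarrow> 'v \<times> 'v) \<Rightarrow> 'v \<Rightarrow> 'v \<Rightarrow> 'e list \<Rightarrow> bool" where
  "is_path V E ep u v es \<longleftrightarrow>
     (\<exists>xs. length xs = length es + 1 \<and> distinct xs \<and> set xs \<subseteq> V \<and>
           hd xs = u \<and> last xs = v \<and> set es \<subseteq> E \<and>
           (\<forall>j < length es. ep (es ! j) = (xs ! j, xs ! Suc j) \<or> ep (es ! j) = (xs ! Suc j, xs ! j)))"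

definition bucket :: "'e list \<Rightarrow> nat" where
  "bucket q = (THE k. 2 ^ k \<le> length q \<and> length q < 2 ^ (k + 1))"

definition Dbar :: "'e list \<Rightarrow> nat" where
  "Dbar q = 2 ^ (bucket q + 1) - 1"

definition Cbar_e :: "nat \<Rightarrow> (nat \<Rightarrow> 'e list) \<Rightarrow> 'e \<Rightarrow> 'e list \<Rightarrow> nat" where
  "Cbar_e N p e q = card {j \<in> {1..N}. e \<in> set (p j) \<and> bucket (p j) = bucket q}"

definition Cbar :: "nat \<Rightarrow> (nat \<Rightarrow> 'e list) \<Rightarrow> 'e list \<Rightarrow> nat" where
  "Cbar N p q = Max ((\<lambda>e. Cbar_e N p e q) ` set q)"

definition pc :: "nat \<Rightarrow> (nat \<Rightarrow> 'e list) \<Rightarrow> nat \<Rightarrow> nat" where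
  "pc N p i = Cbar N p (p i) + Dbar (p i)"

definition CbarMax :: "nat \<Rightarrow> (nat \<Rightarrow> 'e list) \<Rightarrow> nat" where
  "CbarMax N p = Max ((\<lambda>i. Cbar N p (p i)) ` {1..N})"

definition DbarMax :: "nat \<Rightarrow> (nat \<Rightarrow> 'e list) \<Rightarrow> nat" where
  "DbarMax N p = Max ((\<lambda>i. Dbar (p i)) ` {1..N})"

definition SC :: "nat \<Rightarrow> (nat \<Rightarrow> 'e list) \<Rightarrow> nat" where
  "SC N p = CbarMax N p + DbarMax N p"

definition routing_game ::
  "'v set \<Rightarrow> 'e set \<Rightarrow> ('e \<Rightarrow> 'v \<times> 'v) \<Rightarrow> nat \<Rightarrow> (nat \<Rightarrow> 'v) \<Rightarrow> (nat \<Rightarrow> 'v)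
   \<Rightarrow> (nat \<Rightarrow> 'e list set) \<Rightarrow> bool" where
  "routing_game V E ep N u v Ps \<longleftrightarrow>
     N \<ge> 1 \<and> finite V \<and> finite E \<and> (\<forall>e\<in>E. fst (ep e) \<in> V \<and> snd (ep e) \<in> V) \<and>
     (\<forall>i\<in>{1..N}. Ps i \<noteq> {} \<and> finite (Ps i) \<and>
        (\<forall>q\<in>Ps i. q \<noteq> [] \<and> is_path V E ep (u i) (v i) q))"

definition is_routing :: "nat \<Rightarrow> (nat \<Rightarrow> 'e list set) \<Rightarrow> (nat \<Rightarrow> 'e list) \<Rightarrow> bool" where
  "is_routing N Ps p \<longleftrightarrow> (\<forall>i\<in>{1..N}. p i \<in> Ps i)"

definition nash_routing :: "nat \<Rightarrow> (nat \<Rightarrow> 'e list set) \<Rightarrow> (nat \<Rightarrow> 'e list) \<Rightarrow> bool" where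
  "nash_routing N Ps p \<longleftrightarrow> is_routing N Ps p \<and>
     (\<forall>i\<in>{1..N}. \<forall>q\<in>Ps i. pc N p i \<le> pc N (p(i := q)) i)"

definition optimal_routing :: "nat \<Rightarrow> (nat \<Rightarrow> 'e list set) \<Rightarrow> (nat \<Rightarrow> 'e list) \<Rightarrow> bool" where
  "optimal_routing N Ps p \<longleftrightarrow> is_routing N Ps p \<and>
     (\<forall>r. is_routing N Ps r \<longrightarrow> SC N p \<le> SC N r)"

definition Pi_e :: "nat \<Rightarrow> (nat \<Rightarrow> 'e list) \<Rightarrow> 'e \<Rightarrow> nat set" where
  "Pi_e N p e = {i \<in> {1..N}. e \<in> set (p i)}"

definition f_set :: "nat \<Rightarrow> (nat \<Rightarrow> 'e list) \<Rightarrow> (nat \<Rightarrow> 'e list) \<Rightarrow> 'e \<Rightarrow> nat \<Rightarrow> 'e set" where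
  "f_set N p pstar e i = {e' \<in> set (pstar i).
      int (Cbar_e N p e' (pstar i)) \<ge> int (Cbar_e N p e (p i)) - int (DbarMax N pstar)}"

end

theory Submission
  imports Defs
begin

(* Fix an edge e and a player i using e in the Nash routing p, and
   let q = p*_i be i's path in the optimal routing.  Deviating from p_i to q does not
   lower i's cost, and the deviation raises the bucket congestion of any edge by at most
   one (only i itself moves).  Taking e' to be an edge of q of maximal congestion after
   the deviation gives
       C_{e,p_i}(p) + D_{p_i}  <=  C_i + D_i  <=  C_{e',q}(p) + 1 + D_q,
   and since D_{p_i} >= 1 and D_q <= D* this yields C_{e',q}(p) >= C_{e,p_i}(p) - D*,
   i.e. e' lies in f(e,i). *)

lemma Cbar_e_update_le:
  "Cbar_e N (p(i := q)) e r \<le> Cbar_e N p e r + 1"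
proof -
  let ?S = "{j \<in> {1..N}. e \<in> set (p j) \<and> bucket (p j) = bucket r}"
  have "{j \<in> {1..N}. e \<in> set ((p(i := q)) j) \<and> bucket ((p(i := q)) j) = bucket r}
        \<subseteq> insert i ?S" by auto
  then have "Cbar_e N (p(i := q)) e r \<le> card (insert i ?S)"
    unfolding Cbar_e_def by (intro card_mono) auto
  also have "\<dots> \<le> card ?S + 1"
    by (simp add: card_insert_if)
  finally show ?thesis unfolding Cbar_e_def .
qed

lemma Dbar_ge_1: "Dbar q \<ge> 1"
proof -
  have "(2::nat) ^ (bucket q + 1) \<ge> 2" by (simp add: self_le_power)
  then show ?thesis unfolding Dbar_def by linarith
qed

lemma Cbar_e_le_Cbar:
  assumes "e \<in> set q"
  shows "Cbar_e N p e q \<le> Cbar N p q"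
  unfolding Cbar_def using assms by (intro Max_ge) auto

lemma Cbar_attained:
  assumes "q \<noteq> []"
  obtains e where "e \<in> set q" and "Cbar N p q = Cbar_e N p e q"
proof -
  have "Cbar N p q \<in> (\<lambda>e. Cbar_e N p e q) ` set q"
    unfolding Cbar_def using assms by (intro Max_in) auto
  then show ?thesis using that by auto
qed

lemma nash_deviation:
  assumes nash: "nash_routing N Ps p"
    and i: "i \<in> {1..N}" and q: "q \<in> Ps i" "q \<noteq> []"
    and e: "e \<in> set (p i)"
  obtains e' where "e' \<in> set q"
    and "int (Cbar_e N p e' q) \<ge> int (Cbar_e N p e (p i)) - int (Dbar q)"
proof -
  obtain e' where e': "e' \<in> set q" and max: "Cbar N (p(i := q)) q = Cbar_e N (p(i := q)) e' q"
    using Cbar_attained[OF \<open>q \<noteq> []\<close>] .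
  have "Cbar_e N p e (p i) + Dbar (p i) \<le> pc N p i"
    using Cbar_e_le_Cbar[OF e] by (simp add: pc_def)
  also have "\<dots> \<le> pc N (p(i := q)) i"
    using nash i q by (auto simp: nash_routing_def)
  also have "\<dots> = Cbar_e N (p(i := q)) e' q + Dbar q"
    using max by (simp add: pc_def)
  also have "\<dots> \<le> Cbar_e N p e' q + 1 + Dbar q"
    using Cbar_e_update_le[of N p i q e' q] by simp
  finally show ?thesis
    using that[OF e'] Dbar_ge_1[of "p i"] by linarith
qed

lemma Dbar_le_DbarMax:
  assumes "i \<in> {1..N}"
  shows "Dbar (p i) \<le> DbarMax N p"
  unfolding DbarMax_def using assms by (intro Max_ge) auto

theorem mainTheorem12:
  fixes V :: "'v set" and E :: "'e set" and ep :: "'e \<Rightarrow> 'v \<times> 'v"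
    and N :: nat and u v :: "nat \<Rightarrow> 'v" and Ps :: "nat \<Rightarrow> 'e list set"
    and p pstar :: "nat \<Rightarrow> 'e list"
  assumes "routing_game V E ep N u v Ps"
    and "nash_routing N Ps p"
    and "optimal_routing N Ps pstar"
  shows "\<forall>e. \<forall>i\<in>Pi_e N p e. card (f_set N p pstar e i) \<ge> 1"
proof (intro allI ballI)
  fix e i assume "i \<in> Pi_e N p e"
  then have i: "i \<in> {1..N}" and e: "e \<in> set (p i)" by (auto simp: Pi_e_def)
  have q: "pstar i \<in> Ps i"
    using assms(3) i by (auto simp: optimal_routing_def is_routing_def)
  moreover have "pstar i \<noteq> []"
    using assms(1) i q by (auto simp: routing_game_def)
  ultimately obtain e' where "e' \<in> set (pstar i)"
    and "int (Cbar_e N p e' (pstar i)) \<ge> int (Cbar_e N p e (p i)) - int (Dbar (pstar i))"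
    using nash_deviation[OF assms(2) i _ _ e] by blast
  with Dbar_le_DbarMax[OF i, of pstar] have "e' \<in> f_set N p pstar e i"
    by (auto simp: f_set_def)
  moreover have "finite (f_set N p pstar e i)" by (simp add: f_set_def)
  ultimately show "card (f_set N p pstar e i) \<ge> 1"
    by (metis One_nat_def Suc_leI card_gt_0_iff empty_iff)
qed

end
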